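(* A POMDP $\Lambda=(Q,A,\delta,\Omega,O)$ has non-increasing entropy if and only if it is Dirac-preserving.
   Context: A POMDP is $\Lambda=(Q,A,\delta,\Omega,O)$ where $(Q,A,\delta)$ is an MDP ($Q,A$ finite non-empty, $\delta:Q\times A\to\mathcal D(Q)$), $\Omega$ a finite non-empty set of observations and $O:Q\to\Omega$. A belief is $b\in\mathcal D(Q)$; a state $q$ is identified with the Dirac belief on $q$. For $b\in\mathcal D(Q)$, $a\in A$, $o\in\Omega$: $p(b,a,o):=\sum_{q: O(q)=o}\sum_{q'\in Q}b(q')\delta(q',a)(q)$; $\mathrm{Comp}(b,a):=\{o: p(b,a,o)>0\}$; for $o\in\mathrm{Comp}(b,a)$, $\lambda[b,a,o](q):=0$ if $O(q)\ne o$ and $\lambda[b,a,o](q):=\sum_{q'}b(q')\delta(q',a)(q)/p(b,a,o)$ otherwise. $\Lambda$ is Dirac-preserving if for all $q\in Q$, $a\in A$, $o\in\mathrm{Comp}(q,a)$, $|\mathrm{Supp}(\lambda[q,a,o])|=1$. The entropy of $b$ is $H(b):=-\sum_q b(q)\log_2 b(q)$ (with $0\log 0=0$). $\Lambda$ has non-increasing entropy if for all $b\in\mathcal D(Q)$ and $a\in A$: $H(b)\ge\sum_{o\in\mathrm{Comp}(b,a)}p(b,a,o)\,H(\lambda[b,a,o])$. *)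

theory Defs
  imports "HOL-Probability.Probability_Mass_Function"
begin

text \<open>Beliefs are pmfs on 'q;
  a state q is identified with the Dirac belief return_pmf q.\<close>

definition obs_prob :: "('q::finite \<Rightarrow> 'a \<Rightarrow> 'q pmf) \<Rightarrow> ('q \<Rightarrow> 'obs) \<Rightarrow> 'q pmf \<Rightarrow> 'a \<Rightarrow> 'obs \<Rightarrow> real" where
  "obs_prob delta Obs b a ob =
     (\<Sum>q\<in>{q. Obs q = ob}. \<Sum>q'\<in>UNIV. pmf b q' * pmf (delta q' a) q)"

definition Comp :: "('q::finite \<Rightarrow> 'a \<Rightarrow> 'q pmf) \<Rightarrow> ('q \<Rightarrow> 'obs) \<Rightarrow> 'q pmf \<Rightarrow> 'a \<Rightarrow> 'obs set" where
  "Comp delta Obs b a = {ob. obs_prob delta Obs b a ob > 0}"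

definition bupdate :: "('q::finite \<Rightarrow> 'a \<Rightarrow> 'q pmf) \<Rightarrow> ('q \<Rightarrow> 'obs) \<Rightarrow> 'q pmf \<Rightarrow> 'a \<Rightarrow> 'obs \<Rightarrow> 'q \<Rightarrow> real" where
  "bupdate delta Obs b a ob q =
     (if Obs q \<noteq> ob then 0
      else (\<Sum>q'\<in>UNIV. pmf b q' * pmf (delta q' a) q) / obs_prob delta Obs b a ob)"

definition entropy :: "('q::finite \<Rightarrow> real) \<Rightarrow> real" where
  "entropy f = - (\<Sum>q\<in>UNIV. if f q = 0 then 0 else f q * log 2 (f q))"

definition dirac_preserving :: "('q::finite \<Rightarrow> 'a \<Rightarrow> 'q pmf) \<Rightarrow> ('q \<Rightarrow> 'obs) \<Rightarrow> bool" where
  "dirac_preserving delta Obs \<longleftrightarrow>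
     (\<forall>q a ob. ob \<in> Comp delta Obs (return_pmf q) a \<longrightarrow>
        card {x. bupdate delta Obs (return_pmf q) a ob x \<noteq> 0} = 1)"

definition nonincreasing_entropy :: "('q::finite \<Rightarrow> 'a \<Rightarrow> 'q pmf) \<Rightarrow> ('q \<Rightarrow> 'obs::finite) \<Rightarrow> bool" where
  "nonincreasing_entropy delta Obs \<longleftrightarrow>
     (\<forall>b a. entropy (pmf b) \<ge>
        (\<Sum>ob\<in>Comp delta Obs b a. obs_prob delta Obs b a ob * entropy (bupdate delta Obs b a ob)))"

end

theory Submission
  imports Defs
begin

text \<open>Let N be the distribution of the successor state for belief b and action a. The expected
  entropy of the updated belief is the conditional entropy
  H(N | Obs) = - \<Sum>q. N q * log (N q / P (Obs q)), P being the law of the observation; it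
  vanishes iff Obs is injective on the support of N. At a Dirac belief the entropy is 0, so
  non-increasing entropy forces Obs to be injective on every support of delta q a, which is
  Dirac preservation. Conversely, under that injectivity, with joint weights
  w q' q = b q' * delta q' a q, one has
  H(b) - H(N | Obs) \<ge> \<Sum> w * log (w / (b q' * P (Obs q))) \<ge> 0 by Gibbs' inequality,
  since injectivity makes the weights b q' * P (Obs q) on the support of w sum to at most 1.\<close>

lemma entropy_altdef: "entropy f = - (\<Sum>q\<in>UNIV. f q * log 2 (f q))"
  unfolding entropy_def by (intro arg_cong[where f = uminus] sum.cong) auto

lemma pmf_mult_log_nonpos: "pmf M x * log 2 (pmf M x) \<le> 0"
  by (cases "pmf M x = 0")
     (auto intro: mult_nonneg_nonpos simp: pmf_le_1 order.not_eq_order_implies_strict)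

lemma entropy_pmf_nonneg: "0 \<le> entropy (pmf (M :: 'a::finite pmf))"
  unfolding entropy_altdef by (simp add: sum_nonpos pmf_mult_log_nonpos)

lemma entropy_pmf_pos:
  fixes M :: "'a::finite pmf"
  assumes "card (set_pmf M) \<noteq> 1"
  shows "0 < entropy (pmf M)"
proof -
  obtain x where x: "x \<in> set_pmf M"
    using set_pmf_not_empty[of M] by blast
  obtain y where y: "y \<in> set_pmf M" "y \<noteq> x"
  proof (rule ccontr)
    assume "\<not> thesis"
    with that have "set_pmf M = {x}"
      using x by blast
    with assms show False
      by simp
  qed
  have "pmf M x + pmf M y = measure M {x, y}"
    using y by (simp add: measure_measure_pmf_finite)
  also have "\<dots> \<le> 1"
    by simp
  finally have "pmf M x < 1"
    using y(1) by (simp add: set_pmf_eq')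
  then have neg: "pmf M x * log 2 (pmf M x) < 0"
    using x by (simp add: set_pmf_eq' mult_pos_neg)
  have "(\<Sum>q\<in>UNIV. pmf M q * log 2 (pmf M q))
      = pmf M x * log 2 (pmf M x) + (\<Sum>q\<in>UNIV - {x}. pmf M q * log 2 (pmf M q))"
    by (simp add: sum.remove)
  also have "\<dots> < 0"
    using neg sum_nonpos[of "UNIV - {x}" "\<lambda>q. pmf M q * log 2 (pmf M q)"]
    by (simp add: pmf_mult_log_nonpos)
  finally show ?thesis
    by (simp add: entropy_altdef)
qed

lemma entropy_pmf_eq_0_iff:
  fixes M :: "'a::finite pmf"
  shows "entropy (pmf M) = 0 \<longleftrightarrow> card (set_pmf M) = 1"
proof
  assume "card (set_pmf M) = 1"
  then obtain x where "set_pmf M = {x}"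
    by (rule card_1_singletonE)
  then have "M = return_pmf x"
    by (simp add: set_pmf_subset_singleton[symmetric])
  then show "entropy (pmf M) = 0"
    by (simp add: entropy_altdef indicator_def)
qed (use entropy_pmf_pos in fastforce)

lemma gibbs_inequality:
  fixes w v :: "'a \<Rightarrow> real"
  assumes "finite A"
    and "\<And>x. x \<in> A \<Longrightarrow> 0 \<le> w x" and "\<And>x. x \<in> A \<Longrightarrow> 0 \<le> v x"
    and "\<And>x. x \<in> A \<Longrightarrow> 0 < w x \<Longrightarrow> 0 < v x"
    and "sum v A \<le> sum w A"
  shows "0 \<le> (\<Sum>x\<in>A. w x * log 2 (w x / v x))"
proof -
  have term_bound: "(w x - v x) / ln 2 \<le> w x * log 2 (w x / v x)" if "x \<in> A" for x
  proof (cases "w x = 0")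
    case False
    with that assms(2,4) have w: "0 < w x" and v: "0 < v x"
      by force+
    have "w x * ln (v x / w x) \<le> w x * (v x / w x - 1)"
      using w v by (intro mult_left_mono ln_le_minus_one) auto
    then have "w x - v x \<le> w x * ln (w x / v x)"
      using w v by (simp add: ln_div algebra_simps)
    then show ?thesis
      by (simp add: log_def divide_right_mono)
  qed (use that assms(3) in simp)
  have "0 \<le> (sum w A - sum v A) / ln 2"
    using assms(5) by simp
  also have "\<dots> = (\<Sum>x\<in>A. (w x - v x) / ln 2)"
    by (simp add: sum_subtractf diff_divide_distrib sum_divide_distrib)
  also have "\<dots> \<le> (\<Sum>x\<in>A. w x * log 2 (w x / v x))"
    by (intro sum_mono term_bound)
  finally show ?thesis .
qed

lemma inj_on_iff_card_fibres:
  "inj_on f S \<longleftrightarrow> (\<forall>y\<in>f ` S. card (S \<inter> f -` {y}) = 1)"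
proof
  assume "inj_on f S"
  then have "S \<inter> f -` {f x} = {x}" if "x \<in> S" for x
    using that by (auto dest: inj_onD)
  then show "\<forall>y\<in>f ` S. card (S \<inter> f -` {y}) = 1"
    by auto
next
  assume fibres: "\<forall>y\<in>f ` S. card (S \<inter> f -` {y}) = 1"
  show "inj_on f S"
  proof (rule inj_onI)
    fix x x' assume "x \<in> S" "x' \<in> S" "f x = f x'"
    moreover obtain z where "S \<inter> f -` {f x} = {z}"
      using fibres \<open>x \<in> S\<close> by (meson card_1_singletonE imageI)
    ultimately show "x = x'"
      by (metis IntI singletonD vimage_singleton_eq)
  qed
qed

lemma sum_pmf_UNIV: "(\<Sum>x\<in>UNIV. pmf (M :: 'a::finite pmf) x) = 1"
  by (rule sum_pmf_eq_1) auto

lemma pmf_bind_finite: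
  "pmf (bind_pmf (M :: 'a::finite pmf) K) y = (\<Sum>x\<in>UNIV. pmf M x * pmf (K x) y)"
  by (simp add: pmf_bind integral_measure_pmf_real[of UNIV] mult.commute)

lemma sum_pmf_inj_on_le_1:
  assumes "inj_on f A" and "finite A"
  shows "(\<Sum>x\<in>A. pmf M (f x)) \<le> 1"
proof -
  have "(\<Sum>x\<in>A. pmf M (f x)) = measure M (f ` A)"
    using assms by (simp add: measure_measure_pmf_finite sum.reindex)
  then show ?thesis
    by simp
qed

lemma pmf_le_pmf_map: "pmf N x \<le> pmf (map_pmf f N) (f x)"
  using measure_pmf.finite_measure_mono[of "{x}" "f -` {f x}" N]
  by (simp add: pmf_map measure_pmf_single)

definition cond_entropy :: "'q::finite pmf \<Rightarrow> ('q \<Rightarrow> 'o) \<Rightarrow> real" where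
  "cond_entropy N f = - (\<Sum>q\<in>UNIV. pmf N q * log 2 (pmf N q / pmf (map_pmf f N) (f q)))"

lemma sum_entropy_cond_pmf:
  fixes N :: "'q::finite pmf" and f :: "'q \<Rightarrow> 'o::finite"
  shows "(\<Sum>y\<in>set_pmf (map_pmf f N). pmf (map_pmf f N) y * entropy (pmf (cond_pmf N (f -` {y}))))
    = cond_entropy N f"
proof -
  let ?p = "pmf (map_pmf f N)"
  let ?h = "\<lambda>q. pmf N q * log 2 (pmf N q / ?p (f q))"
  have fibre: "?p y * entropy (pmf (cond_pmf N (f -` {y}))) = - (\<Sum>q\<in>UNIV. if f q = y then ?h q else 0)"
    if y: "y \<in> set_pmf (map_pmf f N)" for y
  proof -
    have "set_pmf N \<inter> f -` {y} \<noteq> {}"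
      using y by auto
    then have cond: "pmf (cond_pmf N (f -` {y})) q = (if f q = y then pmf N q / ?p y else 0)" for q
      by (simp add: pmf_cond pmf_map)
    have "0 < ?p y"
      using y by (simp add: pmf_positive)
    then have "?p y * (pmf (cond_pmf N (f -` {y})) q * log 2 (pmf (cond_pmf N (f -` {y})) q))
        = (if f q = y then ?h q else 0)" for q
      by (simp add: cond)
    then show ?thesis
      by (simp add: entropy_altdef sum_distrib_left)
  qed
  have outside: "?h q = 0" if "f q \<notin> set_pmf (map_pmf f N)" for q
    using that pmf_le_pmf_map[of N q f] by (simp add: set_pmf_eq)
  have "(\<Sum>y\<in>set_pmf (map_pmf f N). ?p y * entropy (pmf (cond_pmf N (f -` {y}))))
      = - (\<Sum>y\<in>set_pmf (map_pmf f N). \<Sum>q\<in>UNIV. if f q = y then ?h q else 0)"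
    by (simp add: fibre sum_negf)
  also have "\<dots> = - (\<Sum>q\<in>UNIV. if f q \<in> set_pmf (map_pmf f N) then ?h q else 0)"
    by (subst sum.swap) (simp add: eq_commute)
  also have "\<dots> = cond_entropy N f"
    unfolding cond_entropy_def using outside by (auto intro!: sum.cong)
  finally show ?thesis .
qed

lemma cond_entropy_eq_0_iff_inj_on:
  fixes N :: "'q::finite pmf" and f :: "'q \<Rightarrow> 'o::finite"
  shows "cond_entropy N f = 0 \<longleftrightarrow> inj_on f (set_pmf N)"
proof -
  let ?cond = "\<lambda>y. cond_pmf N (f -` {y})"
  have "cond_entropy N f = 0 \<longleftrightarrow>
      (\<forall>y\<in>set_pmf (map_pmf f N). pmf (map_pmf f N) y * entropy (pmf (?cond y)) = 0)"
    unfolding sum_entropy_cond_pmf[symmetric]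
    by (intro sum_nonneg_eq_0_iff) (simp_all add: entropy_pmf_nonneg)
  also have "\<dots> \<longleftrightarrow> (\<forall>y\<in>set_pmf (map_pmf f N). card (set_pmf (?cond y)) = 1)"
    by (simp add: pmf_positive[THEN less_imp_neq, symmetric] entropy_pmf_eq_0_iff)
  also have "\<dots> \<longleftrightarrow> (\<forall>y\<in>f ` set_pmf N. card (set_pmf N \<inter> f -` {y}) = 1)"
  proof (intro ball_cong)
    fix y assume "y \<in> f ` set_pmf N"
    then have "set_pmf (?cond y) = set_pmf N \<inter> f -` {y}"
      by (subst set_cond_pmf) auto
    then show "card (set_pmf (?cond y)) = 1 \<longleftrightarrow> card (set_pmf N \<inter> f -` {y}) = 1"
      by simp
  qed simp
  also have "\<dots> \<longleftrightarrow> inj_on f (set_pmf N)"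
    by (rule inj_on_iff_card_fibres[symmetric])
  finally show ?thesis .
qed

lemma cond_entropy_nonneg:
  fixes N :: "'q::finite pmf" and f :: "'q \<Rightarrow> 'o::finite"
  shows "0 \<le> cond_entropy N f"
  unfolding sum_entropy_cond_pmf[symmetric]
  by (intro sum_nonneg mult_nonneg_nonneg pmf_nonneg entropy_pmf_nonneg)

lemma cond_entropy_bind_le:
  fixes M :: "'a::finite pmf" and K :: "'a \<Rightarrow> 'q::finite pmf" and f :: "'q \<Rightarrow> 'o"
  assumes inj: "\<And>x. inj_on f (set_pmf (K x))"
  shows "cond_entropy (bind_pmf M K) f \<le> entropy (pmf M)"
proof -
  define N where "N = bind_pmf M K"
  define p where "p = pmf (map_pmf f N)"
  define w where "w x q = pmf M x * pmf (K x) q" for x q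
  define v where "v x q = (if q \<in> set_pmf (K x) then pmf M x * p (f q) else 0)" for x q
  \<comment> \<open>Injectivity of f on each support of K makes v sub-stochastic.\<close>
  have sum_pairs: "(\<Sum>z\<in>UNIV. g z) = (\<Sum>x\<in>UNIV. \<Sum>q\<in>UNIV. g (x, q))"
    for g :: "'a \<times> 'q \<Rightarrow> real"
    by (simp add: sum.cartesian_product)
  have sum_w: "(\<Sum>q\<in>UNIV. w x q) = pmf M x" for x
    by (simp add: w_def sum_distrib_left[symmetric] sum_pmf_UNIV)
  have "(\<Sum>q\<in>UNIV. v x q) \<le> pmf M x" for x
  proof -
    have "(\<Sum>q\<in>UNIV. v x q) = pmf M x * (\<Sum>q\<in>set_pmf (K x). p (f q))"
      by (simp add: v_def sum.If_cases sum_distrib_left)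
    also have "\<dots> \<le> pmf M x"
      unfolding p_def using sum_pmf_inj_on_le_1[OF inj] by (simp add: mult_left_le)
    finally show ?thesis .
  qed
  then have sum_v_le: "(\<Sum>z\<in>UNIV. case_prod v z) \<le> (\<Sum>z\<in>UNIV. case_prod w z)"
    unfolding sum_pairs by (simp add: sum_w sum_mono)
  have v_pos: "0 < v x q" if "0 < w x q" for x q
  proof -
    from that have M: "x \<in> set_pmf M" and K: "q \<in> set_pmf (K x)"
      by (auto simp: w_def set_pmf_eq' zero_less_mult_iff)
    moreover have "q \<in> set_pmf N"
      using M K by (auto simp: N_def)
    then have "0 < p (f q)"
      unfolding p_def by (simp add: pmf_positive pmf_map_outside)
    ultimately show ?thesis
      by (simp add: v_def pmf_positive)
  qed
  have "0 \<le> w x q" "0 \<le> v x q" for x q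
    by (simp_all add: w_def v_def p_def)
  then have gibbs: "0 \<le> (\<Sum>x\<in>UNIV. \<Sum>q\<in>UNIV. w x q * log 2 (w x q / v x q))"
    using gibbs_inequality[of UNIV "case_prod w" "case_prod v"] sum_v_le v_pos
    by (simp add: sum_pairs split_paired_all)
  have pointwise: "w x q * log 2 (w x q / v x q) \<le> w x q * (log 2 (pmf N q / p (f q)) - log 2 (pmf M x))"
    for x q
  proof (cases "w x q = 0")
    case False
    then have w_pos: "0 < w x q" and M_pos: "0 < pmf M x" and "q \<in> set_pmf (K x)"
      by (auto simp: w_def set_pmf_eq' zero_less_mult_iff)
    then have v: "v x q = pmf M x * p (f q)"
      by (simp add: v_def)
    have "w x q \<le> pmf N q"
      unfolding N_def pmf_bind_finite w_def[symmetric] by (rule member_le_sum) (auto simp: w_def)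
    moreover have "pmf N q \<le> p (f q)"
      unfolding p_def by (rule pmf_le_pmf_map)
    ultimately have "log 2 (w x q / v x q) \<le> log 2 (pmf N q / p (f q)) - log 2 (pmf M x)"
      using w_pos M_pos by (simp add: v log_divide log_mult)
    then show ?thesis
      using w_pos by (simp add: mult_left_mono)
  qed simp
  have "cond_entropy N f = - (\<Sum>x\<in>UNIV. \<Sum>q\<in>UNIV. w x q * log 2 (pmf N q / p (f q)))"
    unfolding cond_entropy_def p_def N_def pmf_bind_finite w_def
    by (subst sum.swap) (simp add: sum_distrib_right)
  also have "\<dots> \<le> - (\<Sum>x\<in>UNIV. \<Sum>q\<in>UNIV. w x q * log 2 (pmf M x))"
  proof -
    have "0 \<le> (\<Sum>x\<in>UNIV. \<Sum>q\<in>UNIV. w x q * log 2 (w x q / v x q))"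
      by (rule gibbs)
    also have "\<dots> \<le>
        (\<Sum>x\<in>UNIV. \<Sum>q\<in>UNIV. w x q * (log 2 (pmf N q / p (f q)) - log 2 (pmf M x)))"
      by (intro sum_mono pointwise)
    finally show ?thesis
      by (simp add: right_diff_distrib sum_subtractf)
  qed
  also have "\<dots> = entropy (pmf M)"
    by (simp add: entropy_altdef sum_distrib_right[symmetric] sum_w)
  finally show ?thesis
    by (simp add: N_def)
qed

definition next_pmf :: "('q \<Rightarrow> 'a \<Rightarrow> 'q pmf) \<Rightarrow> 'q pmf \<Rightarrow> 'a \<Rightarrow> 'q pmf" where
  "next_pmf delta b a = bind_pmf b (\<lambda>q. delta q a)"

lemma next_pmf_return_pmf: "next_pmf delta (return_pmf q) a = delta q a"
  by (simp add: next_pmf_def bind_return_pmf)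

lemma obs_prob_eq_pmf_map: "obs_prob delta Obs b a = pmf (map_pmf Obs (next_pmf delta b a))"
  by (simp add: fun_eq_iff obs_prob_def next_pmf_def pmf_map measure_measure_pmf_finite
      pmf_bind_finite vimage_def)

lemma Comp_eq_set_pmf: "Comp delta Obs b a = set_pmf (map_pmf Obs (next_pmf delta b a))"
  by (simp add: Comp_def obs_prob_eq_pmf_map set_pmf_eq')

lemma bupdate_eq_pmf_cond_pmf:
  assumes "ob \<in> Comp delta Obs b a"
  shows "bupdate delta Obs b a ob = pmf (cond_pmf (next_pmf delta b a) (Obs -` {ob}))"
proof -
  have "set_pmf (next_pmf delta b a) \<inter> Obs -` {ob} \<noteq> {}"
    using assms by (auto simp: Comp_eq_set_pmf)
  then show ?thesis
    by (simp add: fun_eq_iff bupdate_def pmf_cond obs_prob_eq_pmf_map pmf_map)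
       (simp add: next_pmf_def pmf_bind_finite)
qed

lemma expected_posterior_entropy:
  fixes delta :: "'q::finite \<Rightarrow> 'a \<Rightarrow> 'q pmf" and Obs :: "'q \<Rightarrow> 'obs::finite"
  shows "(\<Sum>ob\<in>Comp delta Obs b a. obs_prob delta Obs b a ob * entropy (bupdate delta Obs b a ob))
    = cond_entropy (next_pmf delta b a) Obs"
  unfolding sum_entropy_cond_pmf[symmetric]
proof (rule sum.cong)
  fix ob assume "ob \<in> set_pmf (map_pmf Obs (next_pmf delta b a))"
  then have "ob \<in> Comp delta Obs b a"
    by (simp add: Comp_eq_set_pmf)
  then show "obs_prob delta Obs b a ob * entropy (bupdate delta Obs b a ob)
    = pmf (map_pmf Obs (next_pmf delta b a)) ob * entropy (pmf (cond_pmf (next_pmf delta b a) (Obs -` {ob})))"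
    by (simp add: bupdate_eq_pmf_cond_pmf obs_prob_eq_pmf_map)
qed (rule Comp_eq_set_pmf)

lemma dirac_preserving_iff_inj_on:
  "dirac_preserving delta Obs \<longleftrightarrow> (\<forall>q a. inj_on Obs (set_pmf (delta q a)))"
proof -
  have "{x. bupdate delta Obs (return_pmf q) a ob x \<noteq> 0} = set_pmf (delta q a) \<inter> Obs -` {ob}"
    if "ob \<in> Obs ` set_pmf (delta q a)" for q a ob
  proof -
    have "ob \<in> Comp delta Obs (return_pmf q) a"
      using that by (simp add: Comp_eq_set_pmf next_pmf_return_pmf)
    moreover have "set_pmf (delta q a) \<inter> Obs -` {ob} \<noteq> {}"
      using that by auto
    ultimately show ?thesis
      by (simp add: bupdate_eq_pmf_cond_pmf next_pmf_return_pmf set_pmf_eq[symmetric])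
  qed
  then show ?thesis
    by (auto simp: dirac_preserving_def Comp_eq_set_pmf next_pmf_return_pmf inj_on_iff_card_fibres)
qed

theorem mainTheorem10:
  fixes delta :: "'q::finite \<Rightarrow> 'a::finite \<Rightarrow> 'q pmf"
    and Obs :: "'q \<Rightarrow> 'obs::finite"
  shows "nonincreasing_entropy delta Obs \<longleftrightarrow> dirac_preserving delta Obs"
proof
  assume nonincreasing: "nonincreasing_entropy delta Obs"
  have "inj_on Obs (set_pmf (delta q a))" for q a
  proof -
    have "cond_entropy (delta q a) Obs \<le> entropy (pmf (return_pmf q))"
      using nonincreasing[unfolded nonincreasing_entropy_def expected_posterior_entropy, rule_format]
      by (metis next_pmf_return_pmf)
    also have "\<dots> = 0"
      by (simp add: entropy_pmf_eq_0_iff)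
    finally show ?thesis
      using cond_entropy_nonneg cond_entropy_eq_0_iff_inj_on by (metis order.antisym)
  qed
  then show "dirac_preserving delta Obs"
    by (simp add: dirac_preserving_iff_inj_on)
next
  assume "dirac_preserving delta Obs"
  then show "nonincreasing_entropy delta Obs"
    by (simp add: nonincreasing_entropy_def expected_posterior_entropy next_pmf_def
        dirac_preserving_iff_inj_on cond_entropy_bind_le)
qed

end
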